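(* Let $(\mathcal{C},\mathbb{E},\mathfrak{s})$ satisfy (ET1) and (ET2). If $\mathcal{J}$ is a special preenveloping ideal of $\mathcal{C}$, then the pair $({}^{\perp_{\mathbb{E}}}\mathcal{J},\mathcal{J})$ of ideals is an $\mathbb{E}$-cotorsion pair, i.e. $\mathcal{J}=({}^{\perp_{\mathbb{E}}}\mathcal{J})^{\perp_{\mathbb{E}}}$.
   Context: $\mathcal{C}$ additive, $\mathbb{E}:\mathcal{C}^{\mathrm{op}}\times\mathcal{C}\to\mathrm{Ab}$ biadditive (ET1); for $\delta\in\mathbb{E}(C,A)$, $a:A\to A'$, $c:C'\to C$ put $a_\star\delta=\mathbb{E}(C,a)(\delta)$, $c^\star\delta=\mathbb{E}(c,A)(\delta)$. (ET2): $\mathfrak{s}$ is an additive realization (Nakaoka–Palu): each $\delta\in\mathbb{E}(C,A)$ is assigned an equivalence class of sequences $A\to B\to C$ (up to isomorphism of middle terms), $0$ is realized by split sequences, realization respects direct sums, and if $a_\star\delta=c^\star\delta'$ there is a middle map making the realizing sequences commute. Realized pairs are $\mathbb{E}$-triangles $A\to B\to C\overset{\delta}{\dashrightarrow}$; such commuting triples $(a,b,c)$ with $a_\star\delta=c^\star\delta'$ are morphisms of $\mathbb{E}$-triangles. An ideal: class of morphisms with zeros, closed under sums and two-sided composition. $\mathcal{M}^{\perp_{\mathbb{E}}}=\{g:A\to Y\mid m^\star g_\star\delta=0\ \forall m\in\mathcal{M},\,m:X\to C,\ \forall\delta\in\mathbb{E}(C,A)\}$; ${}^{\perp_{\mathbb{E}}}\mathcal{M}=\{g:X\to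 C\mid g^\star m_\star\delta=0\ \forall m\in\mathcal{M},\,m:A\to Y,\ \forall\delta\in\mathbb{E}(C,A)\}$. An $\mathbb{E}$-cotorsion pair is $(\mathcal{I},\mathcal{J})$ with $\mathcal{I}={}^{\perp_{\mathbb{E}}}\mathcal{J}$, $\mathcal{J}=\mathcal{I}^{\perp_{\mathbb{E}}}$. A special $\mathcal{J}$-preenvelope of $A$ is $e:A\to X$ in $\mathcal{J}$ with $\mathbb{E}$-triangles $A\xrightarrow{e}X\to Y\overset{\delta}{\dashrightarrow}$, $A\to B\to C\overset{\delta'}{\dashrightarrow}$ and a morphism of $\mathbb{E}$-triangles $(\mathrm{id}_A,b,j)$ from the first to the second with $j\in{}^{\perp_{\mathbb{E}}}\mathcal{J}$. $\mathcal{J}$ is special preenveloping if every object has a special $\mathcal{J}$-preenvelope. *)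

theory Defs
  imports "HOL-Algebra.Group"
begin

text \<open>A category with an additive structure and extriangulated data:
  objects of type 'o, morphisms of type 'm, elements of E(C,A) of type 'e.
  cmp g f is the composite g o f (first f, then g).
  Eg C A is the abelian group E(C,A) (written multiplicatively as a HOL-Algebra monoid).
  epush C a d = a_* d  for d in E(C,A), a : A -> A'  (result in E(C,A')).
  epull A c d = c^* d  for d in E(C,A), c : C' -> C  (result in E(C',A)).
  real C A d x y  means the sequence A -x-> B -y-> C belongs to s(d), d in E(C,A).\<close>

record ('o, 'm, 'e) ecat =
  Ob :: "'o set"
  Mor :: "'m set"
  src :: "'m \<Rightarrow> 'o"
  tgt :: "'m \<Rightarrow> 'o"
  cmp :: "'m \<Rightarrow> 'm \<Rightarrow> 'm"
  idm :: "'o \<Rightarrow> 'm"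
  madd :: "'m \<Rightarrow> 'm \<Rightarrow> 'm"
  mzero :: "'o \<Rightarrow> 'o \<Rightarrow> 'm"
  Eg :: "'o \<Rightarrow> 'o \<Rightarrow> 'e monoid"
  epush :: "'o \<Rightarrow> 'm \<Rightarrow> 'e \<Rightarrow> 'e"
  epull :: "'o \<Rightarrow> 'm \<Rightarrow> 'e \<Rightarrow> 'e"
  real :: "'o \<Rightarrow> 'o \<Rightarrow> 'e \<Rightarrow> 'm \<Rightarrow> 'm \<Rightarrow> bool"

definition Hom :: "('o, 'm, 'e) ecat \<Rightarrow> 'o \<Rightarrow> 'o \<Rightarrow> 'm set" where
  "Hom X A B = {f \<in> Mor X. src X f = A \<and> tgt X f = B}"

definition category :: "('o, 'm, 'e) ecat \<Rightarrow> bool" where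
  "category X \<longleftrightarrow>
     (\<forall>f\<in>Mor X. src X f \<in> Ob X \<and> tgt X f \<in> Ob X)
   \<and> (\<forall>A\<in>Ob X. idm X A \<in> Hom X A A)
   \<and> (\<forall>f\<in>Mor X. \<forall>g\<in>Mor X. tgt X f = src X g \<longrightarrow> cmp X g f \<in> Hom X (src X f) (tgt X g))
   \<and> (\<forall>f\<in>Mor X. cmp X (idm X (tgt X f)) f = f \<and> cmp X f (idm X (src X f)) = f)
   \<and> (\<forall>f\<in>Mor X. \<forall>g\<in>Mor X. \<forall>h\<in>Mor X. tgt X f = src X g \<longrightarrow> tgt X g = src X h \<longrightarrow>
        cmp X h (cmp X g f) = cmp X (cmp X h g) f)"

definition hom_group :: "('o, 'm, 'e) ecat \<Rightarrow> 'o \<Rightarrow> 'o \<Rightarrow> 'm monoid" where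
  "hom_group X A B = \<lparr>carrier = Hom X A B, mult = madd X, one = mzero X A B\<rparr>"

definition preadditive :: "('o, 'm, 'e) ecat \<Rightarrow> bool" where
  "preadditive X \<longleftrightarrow> category X
   \<and> (\<forall>A\<in>Ob X. \<forall>B\<in>Ob X. comm_group (hom_group X A B))
   \<and> (\<forall>f\<in>Mor X. \<forall>f'\<in>Mor X. \<forall>g\<in>Mor X. src X f = src X f' \<longrightarrow> tgt X f = tgt X f' \<longrightarrow>
        tgt X f = src X g \<longrightarrow> cmp X g (madd X f f') = madd X (cmp X g f) (cmp X g f'))
   \<and> (\<forall>f\<in>Mor X. \<forall>g\<in>Mor X. \<forall>g'\<in>Mor X. src X g = src X g' \<longrightarrow> tgt X g = tgt X g' \<longrightarrow>
        tgt X f = src X g \<longrightarrow> cmp X (madd X g g') f = madd X (cmp X g f) (cmp X g' f))"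

definition is_biproduct ::
  "('o, 'm, 'e) ecat \<Rightarrow> 'o \<Rightarrow> 'o \<Rightarrow> 'o \<Rightarrow> 'm \<Rightarrow> 'm \<Rightarrow> 'm \<Rightarrow> 'm \<Rightarrow> bool" where
  "is_biproduct X A B S iA iB pA pB \<longleftrightarrow>
     iA \<in> Hom X A S \<and> iB \<in> Hom X B S \<and> pA \<in> Hom X S A \<and> pB \<in> Hom X S B
   \<and> cmp X pA iA = idm X A \<and> cmp X pB iB = idm X B
   \<and> cmp X pA iB = mzero X B A \<and> cmp X pB iA = mzero X A B
   \<and> madd X (cmp X iA pA) (cmp X iB pB) = idm X S"

definition additive :: "('o, 'm, 'e) ecat \<Rightarrow> bool" where
  "additive X \<longleftrightarrow> preadditive X
   \<and> (\<exists>Z\<in>Ob X. idm X Z = mzero X Z Z)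
   \<and> (\<forall>A\<in>Ob X. \<forall>B\<in>Ob X. \<exists>S iA iB pA pB. is_biproduct X A B S iA iB pA pB)"

definition iso :: "('o, 'm, 'e) ecat \<Rightarrow> 'm \<Rightarrow> bool" where
  "iso X f \<longleftrightarrow> f \<in> Mor X \<and> (\<exists>g\<in>Hom X (tgt X f) (src X f).
      cmp X g f = idm X (src X f) \<and> cmp X f g = idm X (tgt X f))"

definition ET1 :: "('o, 'm, 'e) ecat \<Rightarrow> bool" where
  "ET1 X \<longleftrightarrow> additive X
   \<and> (\<forall>C\<in>Ob X. \<forall>A\<in>Ob X. comm_group (Eg X C A))
   \<and> (\<forall>C\<in>Ob X. \<forall>a\<in>Mor X. epush X C a \<in> hom (Eg X C (src X a)) (Eg X C (tgt X a)))
   \<and> (\<forall>A\<in>Ob X. \<forall>c\<in>Mor X. epull X A c \<in> hom (Eg X (tgt X c) A) (Eg X (src X c) A))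
   \<and> (\<forall>C\<in>Ob X. \<forall>A\<in>Ob X. \<forall>d\<in>carrier (Eg X C A).
        epush X C (idm X A) d = d \<and> epull X A (idm X C) d = d)
   \<and> (\<forall>C\<in>Ob X. \<forall>a\<in>Mor X. \<forall>a'\<in>Mor X. tgt X a = src X a' \<longrightarrow>
        (\<forall>d\<in>carrier (Eg X C (src X a)).
           epush X C (cmp X a' a) d = epush X C a' (epush X C a d)))
   \<and> (\<forall>A\<in>Ob X. \<forall>c\<in>Mor X. \<forall>c'\<in>Mor X. tgt X c' = src X c \<longrightarrow>
        (\<forall>d\<in>carrier (Eg X (tgt X c) A).
           epull X A (cmp X c c') d = epull X A c' (epull X A c d)))
   \<and> (\<forall>a\<in>Mor X. \<forall>c\<in>Mor X. \<forall>d\<in>carrier (Eg X (tgt X c) (src X a)).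
        epush X (src X c) a (epull X (src X a) c d) = epull X (tgt X a) c (epush X (tgt X c) a d))
   \<and> (\<forall>C\<in>Ob X. \<forall>a\<in>Mor X. \<forall>a'\<in>Mor X. src X a = src X a' \<longrightarrow> tgt X a = tgt X a' \<longrightarrow>
        (\<forall>d\<in>carrier (Eg X C (src X a)).
           epush X C (madd X a a') d = epush X C a d \<otimes>\<^bsub>Eg X C (tgt X a)\<^esub> epush X C a' d))
   \<and> (\<forall>A\<in>Ob X. \<forall>c\<in>Mor X. \<forall>c'\<in>Mor X. src X c = src X c' \<longrightarrow> tgt X c = tgt X c' \<longrightarrow>
        (\<forall>d\<in>carrier (Eg X (tgt X c) A).
           epull X A (madd X c c') d = epull X A c d \<otimes>\<^bsub>Eg X (src X c) A\<^esub> epull X A c' d))"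

definition seq_equiv :: "('o, 'm, 'e) ecat \<Rightarrow> 'm \<Rightarrow> 'm \<Rightarrow> 'm \<Rightarrow> 'm \<Rightarrow> bool" where
  "seq_equiv X x y x' y' \<longleftrightarrow> (\<exists>b\<in>Hom X (tgt X x) (tgt X x'). iso X b \<and> cmp X b x = x' \<and> cmp X y' b = y)"

text \<open>Direct sum of extensions d in E(C,A), d' in E(C',A') w.r.t. chosen biproducts
  (SA,iA,iA',pA,pA') of A,A' and (SC,jC,jC',qC,qC') of C,C':
  d (+) d' = (iA)_*(qC)^* d + (iA')_*(qC')^* d'.\<close>

definition esum :: "('o, 'm, 'e) ecat \<Rightarrow> 'o \<Rightarrow> 'o \<Rightarrow> 'o \<Rightarrow> 'o \<Rightarrow> 'o \<Rightarrow> 'm \<Rightarrow> 'm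
    \<Rightarrow> 'o \<Rightarrow> 'm \<Rightarrow> 'm \<Rightarrow> 'e \<Rightarrow> 'e \<Rightarrow> 'e" where
  "esum X A A' C C' SA iA iA' SC qC qC' d d' =
     epush X SC iA (epull X A qC d) \<otimes>\<^bsub>Eg X SC SA\<^esub> epush X SC iA' (epull X A' qC' d')"

definition msum :: "('o, 'm, 'e) ecat \<Rightarrow> 'm \<Rightarrow> 'm \<Rightarrow> 'm \<Rightarrow> 'm \<Rightarrow> 'm \<Rightarrow> 'm \<Rightarrow> 'm" where
  "msum X pA pA' iB iB' f f' = madd X (cmp X iB (cmp X f pA)) (cmp X iB' (cmp X f' pA'))"

definition ET2 :: "('o, 'm, 'e) ecat \<Rightarrow> bool" where
  "ET2 X \<longleftrightarrow>
     (\<forall>C A d x y. real X C A d x y \<longrightarrow> C \<in> Ob X \<and> A \<in> Ob X \<and> d \<in> carrier (Eg X C A)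
         \<and> x \<in> Mor X \<and> y \<in> Mor X \<and> src X x = A \<and> tgt X x = src X y \<and> tgt X y = C)
   \<and> (\<forall>C\<in>Ob X. \<forall>A\<in>Ob X. \<forall>d\<in>carrier (Eg X C A). \<exists>x y. real X C A d x y)
   \<and> (\<forall>C A d x y x' y'. real X C A d x y \<longrightarrow>
        (real X C A d x' y' \<longleftrightarrow>
          (x' \<in> Mor X \<and> y' \<in> Mor X \<and> src X x' = A \<and> tgt X x' = src X y' \<and> tgt X y' = C
           \<and> seq_equiv X x y x' y')))
   \<and> (\<forall>C A d x y C' A' d' x' y' a c. real X C A d x y \<longrightarrow> real X C' A' d' x' y' \<longrightarrow>
        a \<in> Hom X A A' \<longrightarrow> c \<in> Hom X C C' \<longrightarrow> epush X C a d = epull X A' c d' \<longrightarrow>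
        (\<exists>b\<in>Hom X (tgt X x) (tgt X x'). cmp X b x = cmp X x' a \<and> cmp X c y = cmp X y' b))
   \<and> (\<forall>A C S iA iC pA pC. A \<in> Ob X \<longrightarrow> C \<in> Ob X \<longrightarrow> is_biproduct X A C S iA iC pA pC \<longrightarrow>
        real X C A (\<one>\<^bsub>Eg X C A\<^esub>) iA pC)
   \<and> (\<forall>C A d x y C' A' d' x' y' SA iA iA' pA pA' SB iB iB' pB pB' SC iC iC' pC pC'.
        real X C A d x y \<longrightarrow> real X C' A' d' x' y' \<longrightarrow>
        is_biproduct X A A' SA iA iA' pA pA' \<longrightarrow>
        is_biproduct X (tgt X x) (tgt X x') SB iB iB' pB pB' \<longrightarrow>
        is_biproduct X C C' SC iC iC' pC pC' \<longrightarrow>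
        real X SC SA (esum X A A' C C' SA iA iA' SC pC pC' d d')
          (msum X pA pA' iB iB' x x') (msum X pB pB' iC iC' y y'))"

definition etri :: "('o, 'm, 'e) ecat \<Rightarrow> 'o \<Rightarrow> 'o \<Rightarrow> 'o \<Rightarrow> 'm \<Rightarrow> 'm \<Rightarrow> 'e \<Rightarrow> bool" where
  "etri X A B C x y d \<longleftrightarrow> real X C A d x y \<and> tgt X x = B"

definition etri_morph :: "('o, 'm, 'e) ecat \<Rightarrow> 'o \<Rightarrow> 'o \<Rightarrow> 'o \<Rightarrow> 'm \<Rightarrow> 'm \<Rightarrow> 'e
   \<Rightarrow> 'o \<Rightarrow> 'o \<Rightarrow> 'o \<Rightarrow> 'm \<Rightarrow> 'm \<Rightarrow> 'e \<Rightarrow> 'm \<Rightarrow> 'm \<Rightarrow> 'm \<Rightarrow> bool" where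
  "etri_morph X A B C x y d A' B' C' x' y' d' a b c \<longleftrightarrow>
     etri X A B C x y d \<and> etri X A' B' C' x' y' d'
   \<and> a \<in> Hom X A A' \<and> b \<in> Hom X B B' \<and> c \<in> Hom X C C'
   \<and> cmp X b x = cmp X x' a \<and> cmp X c y = cmp X y' b
   \<and> epush X C a d = epull X A' c d'"

definition is_ideal :: "('o, 'm, 'e) ecat \<Rightarrow> 'm set \<Rightarrow> bool" where
  "is_ideal X J \<longleftrightarrow> J \<subseteq> Mor X
   \<and> (\<forall>A\<in>Ob X. \<forall>B\<in>Ob X. mzero X A B \<in> J)
   \<and> (\<forall>f\<in>J. \<forall>g\<in>J. src X f = src X g \<longrightarrow> tgt X f = tgt X g \<longrightarrow> madd X f g \<in> J)
   \<and> (\<forall>f\<in>J. \<forall>g\<in>Mor X. src X g = tgt X f \<longrightarrow> cmp X g f \<in> J)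
   \<and> (\<forall>f\<in>J. \<forall>h\<in>Mor X. tgt X h = src X f \<longrightarrow> cmp X f h \<in> J)"

definition rperp :: "('o, 'm, 'e) ecat \<Rightarrow> 'm set \<Rightarrow> 'm set" where
  "rperp X M = {g \<in> Mor X. \<forall>m\<in>M. \<forall>d\<in>carrier (Eg X (tgt X m) (src X g)).
      epull X (tgt X g) m (epush X (tgt X m) g d) = \<one>\<^bsub>Eg X (src X m) (tgt X g)\<^esub>}"

definition lperp :: "('o, 'm, 'e) ecat \<Rightarrow> 'm set \<Rightarrow> 'm set" where
  "lperp X M = {g \<in> Mor X. \<forall>m\<in>M. \<forall>d\<in>carrier (Eg X (tgt X g) (src X m)).
      epull X (tgt X m) g (epush X (tgt X g) m d) = \<one>\<^bsub>Eg X (src X g) (tgt X m)\<^esub>}"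

definition cotorsion_pair :: "('o, 'm, 'e) ecat \<Rightarrow> 'm set \<Rightarrow> 'm set \<Rightarrow> bool" where
  "cotorsion_pair X I J \<longleftrightarrow> I = lperp X J \<and> J = rperp X I"

definition special_preenvelope :: "('o, 'm, 'e) ecat \<Rightarrow> 'm set \<Rightarrow> 'o \<Rightarrow> 'm \<Rightarrow> bool" where
  "special_preenvelope X J A e \<longleftrightarrow> e \<in> J \<and> e \<in> Mor X \<and> src X e = A
   \<and> (\<exists>Y y d B C x' y' d' b j.
        etri_morph X A (tgt X e) Y e y d A B C x' y' d' (idm X A) b j
        \<and> j \<in> lperp X J)"

definition special_preenveloping :: "('o, 'm, 'e) ecat \<Rightarrow> 'm set \<Rightarrow> bool" where
  "special_preenveloping X J \<longleftrightarrow> (\<forall>A\<in>Ob X. \<exists>e. special_preenvelope X J A e)"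

end

theory Submission
  imports Defs
begin

text \<open>One inclusion is formal. For the other, let \<open>g : A \<rightarrow> T\<close> lie in
  \<open>(\<^sup>\<perp>J)\<^sup>\<perp>\<close> and let \<open>A \<rightarrow>\<^sup>e B \<rightarrow> Y\<close> (\<open>\<delta>\<close>) be a special
  \<open>J\<close>-preenvelope, so \<open>\<delta> = j\<^sup>\<star>\<delta>'\<close> with \<open>j \<in> \<^sup>\<perp>J\<close>. Then
  \<open>g\<^sub>\<star>\<delta> = j\<^sup>\<star>g\<^sub>\<star>\<delta>' = 0\<close>, so \<open>g\<^sub>\<star>\<delta>\<close> is realized by the split sequence
  \<open>T \<rightarrow> T \<oplus> Y \<rightarrow> Y\<close>, and the morphism of \<open>\<bbbE>\<close>-triangles over \<open>(g, id\<^sub>Y)\<close>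
  provided by (ET2) shows that \<open>g\<close> factors through \<open>e\<close>; hence \<open>g \<in> J\<close>.\<close>

lemma ET1_category: "ET1 X \<Longrightarrow> category X"
  by (simp add: ET1_def additive_def preadditive_def)

lemma ET1_biproduct_exists:
  "\<lbrakk>ET1 X; A \<in> Ob X; B \<in> Ob X\<rbrakk> \<Longrightarrow> \<exists>S iA iB pA pB. is_biproduct X A B S iA iB pA pB"
  by (simp add: ET1_def additive_def)

lemma ET1_epull_id:
  "\<lbrakk>ET1 X; C \<in> Ob X; A \<in> Ob X; d \<in> carrier (Eg X C A)\<rbrakk> \<Longrightarrow> epull X A (idm X C) d = d"
  by (simp add: ET1_def)

lemma ET1_epush_id:
  "\<lbrakk>ET1 X; C \<in> Ob X; A \<in> Ob X; d \<in> carrier (Eg X C A)\<rbrakk> \<Longrightarrow> epush X C (idm X A) d = d"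
  by (simp add: ET1_def)

lemma ET1_epush_epull_commute:
  "\<lbrakk>ET1 X; a \<in> Mor X; c \<in> Mor X; d \<in> carrier (Eg X (tgt X c) (src X a))\<rbrakk>
   \<Longrightarrow> epush X (src X c) a (epull X (src X a) c d) = epull X (tgt X a) c (epush X (tgt X c) a d)"
  unfolding ET1_def by blast

lemma ET1_one_closed:
  "\<lbrakk>ET1 X; C \<in> Ob X; A \<in> Ob X\<rbrakk> \<Longrightarrow> \<one>\<^bsub>Eg X C A\<^esub> \<in> carrier (Eg X C A)"
  unfolding ET1_def by (meson comm_group.axioms(2) group.is_monoid monoid.one_closed)

lemma ET2_real_typed:
  assumes "ET2 X" "real X C A d x y"
  shows "C \<in> Ob X" "A \<in> Ob X" "d \<in> carrier (Eg X C A)" "x \<in> Mor X" "y \<in> Mor X"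
    "src X x = A" "tgt X x = src X y" "tgt X y = C"
proof -
  have "\<forall>C A d x y. real X C A d x y \<longrightarrow> C \<in> Ob X \<and> A \<in> Ob X \<and> d \<in> carrier (Eg X C A)
      \<and> x \<in> Mor X \<and> y \<in> Mor X \<and> src X x = A \<and> tgt X x = src X y \<and> tgt X y = C"
    using assms(1) unfolding ET2_def by (elim conjE)
  with assms(2) show "C \<in> Ob X" "A \<in> Ob X" "d \<in> carrier (Eg X C A)" "x \<in> Mor X" "y \<in> Mor X"
    "src X x = A" "tgt X x = src X y" "tgt X y = C" by blast+
qed

lemma ET2_real_zero_split:
  assumes "ET2 X" "A \<in> Ob X" "C \<in> Ob X" "is_biproduct X A C S iA iC pA pC"
  shows "real X C A (\<one>\<^bsub>Eg X C A\<^esub>) iA pC"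
proof -
  have "\<forall>A C S iA iC pA pC. A \<in> Ob X \<longrightarrow> C \<in> Ob X \<longrightarrow> is_biproduct X A C S iA iC pA pC \<longrightarrow>
      real X C A (\<one>\<^bsub>Eg X C A\<^esub>) iA pC"
    using assms(1) unfolding ET2_def by (elim conjE)
  with assms(2-4) show ?thesis by blast
qed

lemma ET2_morphism_exists:
  assumes "ET2 X" "real X C A d x y" "real X C' A' d' x' y'" "a \<in> Hom X A A'" "c \<in> Hom X C C'"
    "epush X C a d = epull X A' c d'"
  shows "\<exists>b\<in>Hom X (tgt X x) (tgt X x'). cmp X b x = cmp X x' a \<and> cmp X c y = cmp X y' b"
proof -
  have "\<forall>C A d x y C' A' d' x' y' a c. real X C A d x y \<longrightarrow> real X C' A' d' x' y' \<longrightarrow>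
      a \<in> Hom X A A' \<longrightarrow> c \<in> Hom X C C' \<longrightarrow> epush X C a d = epull X A' c d' \<longrightarrow>
      (\<exists>b\<in>Hom X (tgt X x) (tgt X x'). cmp X b x = cmp X x' a \<and> cmp X c y = cmp X y' b)"
    using assms(1) unfolding ET2_def by (elim conjE)
  with assms(2-6) show ?thesis by blast
qed

lemma cmp_Hom:
  "\<lbrakk>category X; f \<in> Hom X A B; g \<in> Hom X B C\<rbrakk> \<Longrightarrow> cmp X g f \<in> Hom X A C"
  unfolding category_def Hom_def by auto

lemma cmp_assoc_Hom:
  "\<lbrakk>category X; f \<in> Hom X A B; g \<in> Hom X B C; h \<in> Hom X C D\<rbrakk>
   \<Longrightarrow> cmp X h (cmp X g f) = cmp X (cmp X h g) f"
  unfolding category_def Hom_def by auto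

lemma cmp_idm_left: "\<lbrakk>category X; f \<in> Hom X A B\<rbrakk> \<Longrightarrow> cmp X (idm X B) f = f"
  unfolding category_def Hom_def by auto

lemma ideal_cmp_left: "\<lbrakk>is_ideal X J; f \<in> J; h \<in> Hom X (tgt X f) B\<rbrakk> \<Longrightarrow> cmp X h f \<in> J"
  unfolding is_ideal_def Hom_def by auto

lemma subset_rperp_lperp: "M \<subseteq> Mor X \<Longrightarrow> M \<subseteq> rperp X (lperp X M)"
  unfolding rperp_def lperp_def by auto

lemma factors_through_inflation_if_epush_one:
  assumes "ET1 X" "ET2 X" and real: "real X C A d x y"
    and g: "g \<in> Hom X A T" and push: "epush X C g d = \<one>\<^bsub>Eg X C T\<^esub>"
  shows "\<exists>h\<in>Hom X (tgt X x) T. cmp X h x = g"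
proof -
  have cat: "category X" using assms(1) by (rule ET1_category)
  have CO: "C \<in> Ob X" using ET2_real_typed[OF assms(2) real] by simp
  have TO: "T \<in> Ob X" using cat g unfolding category_def Hom_def by auto
  obtain S i1 i2 p1 p2 where bp: "is_biproduct X T C S i1 i2 p1 p2"
    using ET1_biproduct_exists[OF assms(1) TO CO] by blast
  have split: "real X C T (\<one>\<^bsub>Eg X C T\<^esub>) i1 p2"
    using ET2_real_zero_split[OF assms(2) TO CO bp] .
  have "epush X C g d = epull X T (idm X C) (\<one>\<^bsub>Eg X C T\<^esub>)"
    using push ET1_epull_id[OF assms(1) CO TO ET1_one_closed[OF assms(1) CO TO]] by simp
  moreover have "idm X C \<in> Hom X C C" using cat CO unfolding category_def by blast
  ultimately obtain b where b: "b \<in> Hom X (tgt X x) (tgt X i1)" and bx: "cmp X b x = cmp X i1 g"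
    using ET2_morphism_exists[OF assms(2) real split g] by blast
  have i1: "i1 \<in> Hom X T S" and p1: "p1 \<in> Hom X S T" and p1i1: "cmp X p1 i1 = idm X T"
    using bp by (auto simp: is_biproduct_def)
  have x: "x \<in> Hom X A (tgt X x)" using ET2_real_typed[OF assms(2) real] by (simp add: Hom_def)
  have b': "b \<in> Hom X (tgt X x) S" using b i1 by (simp add: Hom_def)
  have "cmp X (cmp X p1 b) x = cmp X p1 (cmp X i1 g)"
    using cmp_assoc_Hom[OF cat x b' p1] bx by simp
  also have "\<dots> = g" using cmp_assoc_Hom[OF cat g i1 p1] p1i1 cmp_idm_left[OF cat g] by simp
  finally show ?thesis using cmp_Hom[OF cat b' p1] by blast
qed

lemma epush_epull_one_if_rperp:
  assumes "ET1 X" and g: "g \<in> rperp X M" and j: "j \<in> M" "j \<in> Mor X"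
    and "src X j = C" and "tgt X j = C'"
    and d': "d' \<in> carrier (Eg X C' (src X g))"
  shows "epush X C g (epull X (src X g) j d') = \<one>\<^bsub>Eg X C (tgt X g)\<^esub>"
proof -
  have "g \<in> Mor X" using g unfolding rperp_def by auto
  with j(2) have "epush X C g (epull X (src X g) j d') = epull X (tgt X g) j (epush X C' g d')"
    using ET1_epush_epull_commute[OF assms(1)] d' assms(5,6) by blast
  also have "\<dots> = \<one>\<^bsub>Eg X C (tgt X g)\<^esub>"
    using g j d' assms(5,6) unfolding rperp_def by auto
  finally show ?thesis .
qed

lemma factors_through_special_preenvelope:
  assumes "ET1 X" "ET2 X"
    and e: "special_preenvelope X J (src X g) e" and g: "g \<in> rperp X (lperp X J)"
  shows "\<exists>h\<in>Hom X (tgt X e) (tgt X g). cmp X h e = g"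
proof -
  obtain Y y d B C x' y' d' b j
    where m: "etri_morph X (src X g) (tgt X e) Y e y d (src X g) B C x' y' d' (idm X (src X g)) b j"
      and j: "j \<in> lperp X J"
    using e unfolding special_preenvelope_def by blast
  have real: "real X Y (src X g) d e y" and real': "real X C (src X g) d' x' y'"
    and jH: "j \<in> Hom X Y C" and eq: "epush X Y (idm X (src X g)) d = epull X (src X g) j d'"
    using m by (auto simp: etri_morph_def etri_def)
  note t = ET2_real_typed[OF assms(2) real] and t' = ET2_real_typed[OF assms(2) real']
  have "d = epull X (src X g) j d'"
    using eq ET1_epush_id[OF assms(1) t(1,2,3)] by simp
  then have "epush X Y g d = \<one>\<^bsub>Eg X Y (tgt X g)\<^esub>"
    using epush_epull_one_if_rperp[OF assms(1) g j _ _ _ t'(3)] jH by (simp add: Hom_def)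
  moreover have "g \<in> Hom X (src X g) (tgt X g)" using g by (simp add: rperp_def Hom_def)
  ultimately show ?thesis
    using factors_through_inflation_if_epush_one[OF assms(1,2) real] by blast
qed

theorem theorem3p13:
  fixes X :: "('o, 'm, 'e) ecat" and J :: "'m set"
  assumes "ET1 X" and "ET2 X"
    and "is_ideal X J"
    and "special_preenveloping X J"
  shows "cotorsion_pair X (lperp X J) J"
proof -
  have JM: "J \<subseteq> Mor X" using assms(3) by (simp add: is_ideal_def)
  have "rperp X (lperp X J) \<subseteq> J"
  proof
    fix g assume g: "g \<in> rperp X (lperp X J)"
    have "src X g \<in> Ob X"
      using g ET1_category[OF assms(1)] unfolding rperp_def category_def by auto
    then obtain e where e: "special_preenvelope X J (src X g) e"
      using assms(4) by (auto simp: special_preenveloping_def)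
    then obtain h where "h \<in> Hom X (tgt X e) (tgt X g)" "cmp X h e = g"
      using factors_through_special_preenvelope[OF assms(1,2) e g] by blast
    moreover have "e \<in> J" using e by (simp add: special_preenvelope_def)
    ultimately show "g \<in> J" using ideal_cmp_left[OF assms(3)] by metis
  qed
  with subset_rperp_lperp[OF JM] show ?thesis by (auto simp: cotorsion_pair_def)
qed

end
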